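(* For Lebesgue almost all $x\in(0,1)$, $$\limsup_{n\to\infty}\frac{\log R_n(x)-\log n}{\log\log n}=1\quad\text{and}\quad\limsup_{n\to\infty}\frac{\log M_n(x)-\log n}{\log\log n}=1.$$
   Context: Signed Engel expansion: define $T\colon[0,1)\to[0,1)$ by: for $k\in\mathbb{N}$, $Tx=\lceil 1/x\rceil x-1$ if $x\in(\frac{1}{2k},\frac{1}{2k-1})$; $Tx=1-\lfloor 1/x\rfloor x$ if $x\in(\frac{1}{2k+1},\frac{1}{2k})$; $Tx=0$ if $x\in\{0\}\cup\{1/n\colon n\ge 2\}$. For $x\in(0,1)$, $d_1(x)=\lceil 1/x\rceil$ if $x\in[\frac{1}{2k},\frac{1}{2k-1})$ for some $k\in\mathbb{N}$, and $d_1(x)=\lfloor 1/x\rfloor$ if $x\in[\frac{1}{2k+1},\frac{1}{2k})$ for some $k\in\mathbb{N}$; $d_{n+1}(x)=d_1(T^nx)$. For irrational $x\in(0,1)$, $R_1(x)=d_1(x)$, $R_n(x)=d_n(x)/d_{n-1}(x)$ for $n\ge2$, and $M_n(x)=\max\{R_k(x)\colon 1\le k\le n\}$. *)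

theory Defs
  imports "HOL-Analysis.Analysis"
begin

text \<open>Signed Engel expansion map T on [0,1).\<close>
definition sgnT :: "real \<Rightarrow> real" where
  "sgnT x = (if \<exists>k::nat. k \<ge> 1 \<and> 1 / real (2*k) < x \<and> x < 1 / real (2*k - 1)
               then real_of_int (ceiling (1/x)) * x - 1
             else if \<exists>k::nat. k \<ge> 1 \<and> 1 / real (2*k+1) < x \<and> x < 1 / real (2*k)
               then 1 - real_of_int (floor (1/x)) * x
             else 0)"

definition sgn_d1 :: "real \<Rightarrow> nat" where
  "sgn_d1 x = (if \<exists>k::nat. k \<ge> 1 \<and> 1 / real (2*k) \<le> x \<and> x < 1 / real (2*k - 1)
                then nat (ceiling (1/x))
              else nat (floor (1/x)))"

text \<open>Digits: sgn_d (Suc n) x = d_{n+1}(x) = d_1(T^n x); sgn_d 0 is unused.\<close>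
definition sgn_d :: "nat \<Rightarrow> real \<Rightarrow> nat" where
  "sgn_d n x = sgn_d1 ((sgnT ^^ (n - 1)) x)"

definition sgn_R :: "nat \<Rightarrow> real \<Rightarrow> real" where
  "sgn_R n x = (if n \<le> 1 then real (sgn_d 1 x) else real (sgn_d n x) / real (sgn_d (n - 1) x))"

definition sgn_M :: "nat \<Rightarrow> real \<Rightarrow> real" where
  "sgn_M n x = Max ((\<lambda>k. sgn_R k x) ` {1..n})"

end

theory Submission
  imports Defs
begin

(* On the branch 1/(j+1) < x < 1/j the first digit is the even one of j, j+1, and T maps the
   branch affinely, with slope of that size, onto (0, 1/q) where q is the odd one of j, j+1.
   As slope times q is j(j+1), a set Q with |Q \<inter> (0, 1/m)| <= c/m for all m keeps this property
   under preimages by T: the branches below 1/m have weights 1/(j(j+1)) summing to 1/m.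
   This gives a quasi-independence of consecutive digits:
     |{d(k+2) >= t d(k+1)}| <= 3/t,
     |{d(k+i+2) < t(i) d(k+i+1) for all i < L}| <= Prod (1 - 1/(3 t(i))).
   For t = n (log n)^p with p > 1 the first bound is summable, so by Borel-Cantelli
   R_n <= n (log n)^p eventually; for t = n log n the product tends to 0 because Sum 1/(n log n)
   diverges, so R_n >= n log n infinitely often. These two bounds pin the limsup of
   (log R_n - log n) / log log n at 1, and they carry over to the running maximum M_n. *)

lemma summable_inverse_mult_ln_powr_iff:
  fixes p :: real
  assumes p: "0 < p"
  shows "summable (\<lambda>n. 1 / (real n * ln (real n) powr p)) \<longleftrightarrow> summable (\<lambda>n. 1 / real n powr p)"
proof -
  define f where "f n = 1 / (real (max 3 n) * ln (real (max 3 n)) powr p)" for n :: nat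
  have grow: "real a * ln (real a) powr p \<le> real b * ln (real b) powr p" if "3 \<le> a" "a \<le> b" for a b :: nat
    using that p by (intro mult_mono powr_mono2) auto
  have pos: "0 < real a * ln (real a) powr p" if "3 \<le> a" for a :: nat
    using that by simp
  have "f (Suc n) \<le> f n" for n
    unfolding f_def using grow[of "max 3 n" "max 3 (Suc n)"] pos[of "max 3 n"] pos[of "max 3 (Suc n)"]
    by (intro divide_left_mono) auto
  moreover have "0 \<le> f n" for n by (simp add: f_def)
  ultimately have "summable f \<longleftrightarrow> summable (\<lambda>n. 2 ^ n * f (2 ^ n))"
    by (intro condensation_test) auto
  also have "\<dots> \<longleftrightarrow> summable (\<lambda>n. 1 / ln 2 powr p * (1 / real n powr p))"
  proof (rule summable_cong)
    have eq: "2 ^ n * f (2 ^ n) = 1 / ln 2 powr p * (1 / real n powr p)" if "2 \<le> n" for n :: nat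
    proof -
      have "(3::nat) \<le> 2 ^ 2" by simp
      also have "\<dots> \<le> 2 ^ n" using that by (rule power_increasing) simp
      finally have "max 3 (2 ^ n) = (2 ^ n :: nat)" by simp
      moreover have "ln (real (2 ^ n)) powr p = real n powr p * ln 2 powr p"
        by (simp add: ln_realpow powr_mult)
      ultimately show ?thesis by (simp add: f_def field_simps)
    qed
    show "eventually (\<lambda>n. 2 ^ n * f (2 ^ n) = 1 / ln 2 powr p * (1 / real n powr p)) sequentially"
      by (rule eventually_mono[OF eventually_ge_at_top eq])
  qed
  also have "\<dots> \<longleftrightarrow> summable (\<lambda>n. 1 / real n powr p)"
    using summable_cmult_iff[of "1 / ln 2 powr p" "\<lambda>n. 1 / real n powr p"] by simp
  finally have "summable f \<longleftrightarrow> summable (\<lambda>n. 1 / real n powr p)" .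
  moreover have "summable f \<longleftrightarrow> summable (\<lambda>n. 1 / (real n * ln (real n) powr p))"
    by (rule summable_cong) (use eventually_ge_at_top[of 3] in \<open>eventually_elim, simp add: f_def\<close>)
  ultimately show ?thesis by simp
qed

lemma summable_inverse_mult_ln_powr:
  fixes p :: real
  assumes "1 < p"
  shows "summable (\<lambda>n. 1 / (real n * ln (real n) powr p))"
  using assms summable_real_powr_iff[of "- p"]
  by (simp add: summable_inverse_mult_ln_powr_iff powr_minus_divide)

lemma not_summable_inverse_mult_ln: "\<not> summable (\<lambda>n. 1 / (real n * ln (real n)))"
proof -
  have "(\<lambda>n. 1 / (real n * ln (real n) powr 1)) = (\<lambda>n. 1 / (real n * ln (real n)))"
  proof
    fix n :: nat
    show "1 / (real n * ln (real n) powr 1) = 1 / (real n * ln (real n))"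
      by (cases "n = 0") auto
  qed
  then show ?thesis
    using summable_inverse_mult_ln_powr_iff[of 1] not_summable_harmonic[where 'a = real]
    by (simp add: divide_inverse)
qed

lemma not_summable_inverse_mult_ln_shift:
  fixes c :: real
  assumes "c \<noteq> 0"
  shows "\<not> summable (\<lambda>i. 1 / (c * (real (i + N) * ln (real (i + N)))))"
proof
  assume "summable (\<lambda>i. 1 / (c * (real (i + N) * ln (real (i + N)))))"
  then have "summable (\<lambda>i. c * (1 / (c * (real (i + N) * ln (real (i + N))))))" by (rule summable_mult)
  then have "summable (\<lambda>i. 1 / (real (i + N) * ln (real (i + N))))" using assms by simp
  then show False using not_summable_inverse_mult_ln summable_iff_shift[of _ N] by blast
qed

lemma sums_tail_inverse_mult_Suc:
  assumes m: "1 \<le> m"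
  shows "(\<lambda>j. if m \<le> j then 1 / (real j * (real j + 1)) else 0) sums (1 / real m)"
proof -
  define f where "f j = 1 / real (max m j)" for j
  have "eventually (\<lambda>j. 1 / real j = f j) sequentially"
    using eventually_ge_at_top[of m] by eventually_elim (simp add: f_def)
  then have "f \<longlonglongrightarrow> 0" by (rule Lim_transform_eventually[OF lim_1_over_n])
  then have "(\<lambda>j. f j - f (Suc j)) sums (f 0 - 0)" by (rule telescope_sums')
  moreover have "f j - f (Suc j) = (if m \<le> j then 1 / (real j * (real j + 1)) else 0)" for j
  proof (cases "m \<le> j")
    case True
    then have "real j > 0" using m by simp
    then show ?thesis using True by (simp add: f_def field_simps)
  qed (simp add: f_def)
  ultimately show ?thesis by (simp add: f_def)
qed

lemma prod_one_minus_less: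
  fixes a :: "nat \<Rightarrow> real"
  assumes a0: "\<And>i. 0 \<le> a i" and a1: "\<And>i. a i \<le> 1" and "\<not> summable a" and e: "0 < e"
  shows "\<exists>L. (\<Prod>i<L. 1 - a i) < e"
proof -
  obtain L where L: "- ln e < sum a {..<L}"
  proof -
    have "\<not> (\<forall>n. (\<Sum>k\<le>n. a k) \<le> - ln e)"
      using bounded_imp_summable[of a "- ln e"] a0 assms(3) by blast
    then obtain n where "- ln e < (\<Sum>k\<le>n. a k)" by (auto simp: not_le)
    then show ?thesis using that[of "Suc n"] by (simp add: lessThan_Suc_atMost)
  qed
  have "(\<Prod>i<L. 1 - a i) \<le> (\<Prod>i<L. exp (- a i))"
  proof (intro prod_mono conjI)
    fix i
    show "0 \<le> 1 - a i" "1 - a i \<le> exp (- a i)" using a1[of i] exp_ge_add_one_self[of "- a i"] by simp_all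
  qed
  also have "\<dots> = exp (- sum a {..<L})" by (simp add: exp_sum[symmetric] sum_negf)
  also have "\<dots> < exp (ln e)" using L by simp
  also have "\<dots> = e" using e by simp
  finally show ?thesis by blast
qed

lemma one_less_ln_nat: "3 \<le> n \<Longrightarrow> 1 < ln (real n)"
  using exp_less_cancel_iff[of 1 "ln (real n)"] e_less_272 by simp

lemma mono_on_mult_ln_powr:
  assumes "0 \<le> p"
  shows "mono_on {1..} (\<lambda>n::nat. real n * ln (real n) powr p)"
proof (rule mono_onI)
  show "real a * ln (real a) powr p \<le> real b * ln (real b) powr p"
    if "a \<in> {1..}" "b \<in> {1..}" "a \<le> b" for a b :: nat
    using that assms by (intro mult_mono powr_mono2) auto
qed

lemma filterlim_mult_ln_powr_at_top:
  assumes "0 \<le> p"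
  shows "filterlim (\<lambda>n. real n * ln (real n) powr p) at_top sequentially"
proof (rule filterlim_at_top_mono[OF filterlim_real_sequentially])
  show "eventually (\<lambda>n. real n \<le> real n * ln (real n) powr p) sequentially"
    using eventually_ge_at_top[of 3]
  proof eventually_elim
    case (elim n)
    then have "1 \<le> ln (real n) powr p"
      using one_less_ln_nat[of n] assms by (intro ge_one_powr_ge_zero) auto
    then show ?case using mult_left_mono[of 1 _ "real n"] by simp
  qed
qed

lemma loglog_exponent_ge_1:
  assumes n: "3 \<le> n" and y: "real n * ln (real n) \<le> y"
  shows "1 \<le> (ln y - ln (real n)) / ln (ln (real n))"
proof -
  have l: "1 < ln (real n)" by (rule one_less_ln_nat[OF n])
  then have "0 < real n * ln (real n)" using n by simp
  then have "ln (real n * ln (real n)) \<le> ln y" using y by (subst ln_le_cancel_iff) auto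
  then have "ln (ln (real n)) \<le> ln y - ln (real n)" using n l by (simp add: ln_mult)
  then show ?thesis using l by simp
qed

lemma loglog_exponent_le:
  assumes n: "3 \<le> n" and y: "0 < y" "y \<le> real n * ln (real n) powr p"
  shows "(ln y - ln (real n)) / ln (ln (real n)) \<le> p"
proof -
  have l: "1 < ln (real n)" by (rule one_less_ln_nat[OF n])
  then have "ln y \<le> ln (real n * ln (real n) powr p)" using n y by (subst ln_le_cancel_iff) auto
  then have "ln y - ln (real n) \<le> p * ln (ln (real n))" using n l by (simp add: ln_mult)
  then show ?thesis using l by (simp add: divide_le_eq)
qed

definition loglog_growth :: "(nat \<Rightarrow> real) \<Rightarrow> bool" where
  "loglog_growth r \<longleftrightarrow>
    eventually (\<lambda>n. 0 < r n) sequentially \<and>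
    frequently (\<lambda>n. real n * ln (real n) \<le> r n) sequentially \<and>
    (\<forall>p>1. eventually (\<lambda>n. r n \<le> real n * ln (real n) powr p) sequentially)"

lemma limsup_loglog_exponent_eq_1:
  assumes "loglog_growth r"
  shows "limsup (\<lambda>n. ereal ((ln (r n) - ln (real n)) / ln (ln (real n)))) = 1"
proof (rule antisym)
  define g where "g n = (ln (r n) - ln (real n)) / ln (ln (real n))" for n
  have pos: "eventually (\<lambda>n. 0 < r n \<and> 3 \<le> n) sequentially"
    using assms eventually_ge_at_top[of 3] unfolding loglog_growth_def by (auto intro: eventually_conj)
  have "frequently (\<lambda>n. real n * ln (real n) \<le> r n \<and> (0 < r n \<and> 3 \<le> n)) sequentially"
    using assms pos unfolding loglog_growth_def by (intro frequently_eventually_frequently) auto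
  then have freq: "frequently (\<lambda>n. 1 \<le> g n) sequentially"
    by (rule frequently_elim1) (auto simp: g_def intro: loglog_exponent_ge_1)
  show "1 \<le> limsup (\<lambda>n. ereal (g n))"
  proof (rule ccontr)
    assume "\<not> 1 \<le> limsup (\<lambda>n. ereal (g n))"
    then have "eventually (\<lambda>n. ereal (g n) < 1) sequentially" by (intro Limsup_lessD) auto
    then have "eventually (\<lambda>n. \<not> 1 \<le> g n) sequentially" by (rule eventually_mono) auto
    with freq show False by (simp add: frequently_def)
  qed
  show "limsup (\<lambda>n. ereal (g n)) \<le> 1"
  proof (rule ereal_le_epsilon2)
    fix e :: real
    assume "0 < e"
    then have "eventually (\<lambda>n. r n \<le> real n * ln (real n) powr (1 + e)) sequentially"
      using assms unfolding loglog_growth_def by simp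
    with pos have "eventually (\<lambda>n. ereal (g n) \<le> ereal (1 + e)) sequentially"
      by eventually_elim (auto simp: g_def intro: loglog_exponent_le)
    then have "limsup (\<lambda>n. ereal (g n)) \<le> ereal (1 + e)" by (rule Limsup_bounded)
    then show "limsup (\<lambda>n. ereal (g n)) \<le> 1 + ereal e" by (simp add: add.commute)
  qed
qed

lemma eventually_Max_le:
  fixes r u :: "nat \<Rightarrow> real"
  assumes le: "eventually (\<lambda>n. r n \<le> u n) sequentially"
    and mono: "mono_on {K..} u" and lim: "filterlim u at_top sequentially"
  shows "eventually (\<lambda>n. Max (r ` {1..n}) \<le> u n) sequentially"
proof -
  have "eventually (\<lambda>n. r n \<le> u n \<and> max 1 K \<le> n) sequentially"
    using le eventually_ge_at_top by (rule eventually_conj)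
  then obtain n0 where n0_le: "\<And>n. n0 \<le> n \<Longrightarrow> r n \<le> u n \<and> max 1 K \<le> n"
    unfolding eventually_sequentially by blast
  have n0: "1 \<le> n0" "K \<le> n0" "\<And>n. n0 \<le> n \<Longrightarrow> r n \<le> u n"
    using n0_le[OF order_refl] n0_le by simp_all
  define C where "C = Max (r ` {1..n0})"
  have "eventually (\<lambda>n. C \<le> u n) sequentially"
    using lim unfolding filterlim_at_top by blast
  then have "eventually (\<lambda>n. C \<le> u n \<and> n0 \<le> n) sequentially"
    using eventually_ge_at_top by (rule eventually_conj)
  then show ?thesis
  proof eventually_elim
    case (elim n)
    show ?case
    proof (rule Max.boundedI)
      fix y assume "y \<in> r ` {1..n}"
      then obtain k where k: "k \<in> {1..n}" "y = r k" by blast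
      show "y \<le> u n"
      proof (cases "k \<le> n0")
        case True
        then have "r k \<le> C" unfolding C_def using k by (intro Max_ge) auto
        then show ?thesis using elim k by simp
      next
        case False
        then have "r k \<le> u k" using n0(3)[of k] by simp
        also have "u k \<le> u n" using False k n0(2) by (intro mono_onD[OF mono]) auto
        finally show ?thesis using k by simp
      qed
    qed (use elim n0 in auto)
  qed
qed

lemma loglog_growth_running_max:
  assumes "loglog_growth r"
  shows "loglog_growth (\<lambda>n. Max (r ` {1..n}))"
  unfolding loglog_growth_def
proof (intro conjI allI impI)
  have Max_ge: "r k \<le> Max (r ` {1..n})" if "1 \<le> k" "k \<le> n" for k n
    using that by (intro Max_ge) auto
  have "eventually (\<lambda>n. 0 < r n) sequentially" using assms unfolding loglog_growth_def by simp
  then have "eventually (\<lambda>n. 0 < r n \<and> 1 \<le> n) sequentially"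
    using eventually_ge_at_top by (rule eventually_conj)
  then obtain n0 where n0_le: "\<And>n. n0 \<le> n \<Longrightarrow> 0 < r n \<and> 1 \<le> n"
    unfolding eventually_sequentially by blast
  have n0: "0 < r n0" "1 \<le> n0" using n0_le[OF order_refl] by simp_all
  show "eventually (\<lambda>n. 0 < Max (r ` {1..n})) sequentially"
  proof (rule eventually_mono[OF eventually_ge_at_top[of n0]])
    show "0 < Max (r ` {1..n})" if "n0 \<le> n" for n using Max_ge[of n0 n] n0 that by linarith
  qed
  have "frequently (\<lambda>n. real n * ln (real n) \<le> r n) sequentially"
    using assms unfolding loglog_growth_def by simp
  then have "frequently (\<lambda>n. real n * ln (real n) \<le> r n \<and> 1 \<le> n) sequentially"
    by (rule frequently_eventually_frequently[OF _ eventually_ge_at_top])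
  then show "frequently (\<lambda>n. real n * ln (real n) \<le> Max (r ` {1..n})) sequentially"
  proof (rule frequently_elim1)
    show "real n * ln (real n) \<le> Max (r ` {1..n})" if "real n * ln (real n) \<le> r n \<and> 1 \<le> n" for n
      using that Max_ge[of n n] by linarith
  qed
  fix p :: real
  assume p: "1 < p"
  show "eventually (\<lambda>n. Max (r ` {1..n}) \<le> real n * ln (real n) powr p) sequentially"
  proof (rule eventually_Max_le)
    show "eventually (\<lambda>n. r n \<le> real n * ln (real n) powr p) sequentially"
      using assms p unfolding loglog_growth_def by simp
    show "mono_on {1..} (\<lambda>n. real n * ln (real n) powr p)"
      using p by (intro mono_on_mult_ln_powr) simp
    show "filterlim (\<lambda>n. real n * ln (real n) powr p) at_top sequentially"
      using p by (intro filterlim_mult_ln_powr_at_top) simp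
  qed
qed

lemma emeasure_lborel_affine_preimage:
  fixes c e :: real
  assumes e: "e \<noteq> 0" and B[measurable]: "B \<in> sets borel"
  shows "emeasure lborel ((\<lambda>x. c + e * x) -` B) = ennreal (1 / \<bar>e\<bar>) * emeasure lborel B"
proof -
  have "emeasure lborel B = ennreal \<bar>e\<bar> * emeasure lborel ((\<lambda>x. c + e * x) -` B)"
    by (subst lborel_real_affine[OF e, of c])
      (simp add: emeasure_density emeasure_distr nn_integral_cmult_indicator)
  then have "ennreal (1 / \<bar>e\<bar>) * emeasure lborel B
      = (ennreal (1 / \<bar>e\<bar>) * ennreal \<bar>e\<bar>) * emeasure lborel ((\<lambda>x. c + e * x) -` B)"
    by (simp add: mult.assoc)
  also have "ennreal (1 / \<bar>e\<bar>) * ennreal \<bar>e\<bar> = 1"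
    using e by (simp add: ennreal_mult[symmetric])
  finally show ?thesis by simp
qed

(* On the branch 1/(j+1) < x < 1/j the digit sgn_d1 x is even_pick j, and sgnT is the affine
   map branch_map j, which maps the branch onto (0, 1/odd_pick j). *)
definition even_pick :: "nat \<Rightarrow> nat" where
  "even_pick j = (if even j then j else j + 1)"

definition odd_pick :: "nat \<Rightarrow> nat" where
  "odd_pick j = (if odd j then j else j + 1)"

lemma even_pick_times_odd_pick: "real (even_pick j) * real (odd_pick j) = real j * (real j + 1)"
  by (simp add: even_pick_def odd_pick_def)

lemma even_pick_bounds: "j \<le> even_pick j" "even_pick j \<le> j + 1"
  by (simp_all add: even_pick_def)

lemma odd_pick_bounds: "j \<le> odd_pick j" "odd_pick j \<le> j + 1"
  by (simp_all add: odd_pick_def)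

lemma even_pick_ge_2: "1 \<le> j \<Longrightarrow> 2 \<le> even_pick j"
  unfolding even_pick_def by presburger

definition branch_map :: "nat \<Rightarrow> real \<Rightarrow> real" where
  "branch_map j x = (if odd j then real (even_pick j) * x - 1 else 1 - real (even_pick j) * x)"

lemma between_inverses_iff:
  fixes x :: real
  assumes "1 \<le> j" "1 \<le> a" "1 / real (j + 1) < x" "x < 1 / real j"
  shows "1 / real (a + 1) \<le> x \<and> x < 1 / real a \<longleftrightarrow> a = j"
proof
  assume a: "1 / real (a + 1) \<le> x \<and> x < 1 / real a"
  have "\<not> a < j"
  proof
    assume "a < j"
    then have "1 / real j \<le> 1 / real (a + 1)" using assms by (simp add: frac_le)
    then show False using a assms by linarith
  qed
  moreover have "\<not> j < a"
  proof
    assume "j < a"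
    then have "1 / real a \<le> 1 / real (j + 1)" using assms by (simp add: frac_le)
    then show False using a assms by linarith
  qed
  ultimately show "a = j" by simp
qed (use assms in simp)

lemma sgn_d1_sgnT_on_branch:
  assumes j: "1 \<le> j" and x: "1 / real (j + 1) < x" "x < 1 / real j"
  shows "sgn_d1 x = even_pick j" "sgnT x = branch_map j x"
proof -
  have "0 < 1 / real (j + 1)" by simp
  then have x0: "0 < x" using x(1) by linarith
  have y: "real j < 1 / x" "1 / x < real j + 1" using x x0 j by (auto simp: field_simps)
  have left: "(1 / real (2*k) \<le> x \<and> x < 1 / real (2*k - 1)) \<longleftrightarrow> 2*k - 1 = j"
    and left_strict: "(1 / real (2*k) < x \<and> x < 1 / real (2*k - 1)) \<longleftrightarrow> 2*k - 1 = j"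
    if "1 \<le> k" for k
    using between_inverses_iff[OF j _ x, where a = "2*k - 1"] that x(1) by auto
  have right_strict: "(1 / real (2*k + 1) < x \<and> x < 1 / real (2*k)) \<longleftrightarrow> 2*k = j"
    if "1 \<le> k" for k
    using between_inverses_iff[OF j _ x, where a = "2*k"] that x(1) by auto
  have "sgn_d1 x = even_pick j \<and> sgnT x = branch_map j x"
  proof (cases "odd j")
    case True
    define k where "k = (j + 1) div 2"
    have k: "j = 2*k - 1" "1 \<le> k" using True j unfolding k_def by presburger+
    have "ceiling (1 / x) = int j + 1" using y by (intro ceiling_unique) auto
    then show ?thesis unfolding sgnT_def sgn_d1_def using left left_strict k True
      by (auto simp: even_pick_def branch_map_def)
  next
    case False
    define k where "k = j div 2"
    have k: "j = 2*k" "1 \<le> k" using False j unfolding k_def by presburger+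
    have "floor (1 / x) = int j" using y by (intro floor_unique) auto
    moreover have "2*k' - 1 \<noteq> j" for k' using k by presburger
    then have "\<not> (\<exists>k'. 1 \<le> k' \<and> 1 / real (2*k') \<le> x \<and> x < 1 / real (2*k' - 1))"
      and "\<not> (\<exists>k'. 1 \<le> k' \<and> 1 / real (2*k') < x \<and> x < 1 / real (2*k' - 1))"
      using left left_strict by blast+
    then have "sgn_d1 x = nat (floor (1 / x))" "sgnT x = 1 - real_of_int (floor (1 / x)) * x"
      unfolding sgnT_def sgn_d1_def using right_strict k by auto
    ultimately show ?thesis using k False by (simp add: even_pick_def branch_map_def)
  qed
  then show "sgn_d1 x = even_pick j" "sgnT x = branch_map j x" by auto
qed

lemma branch_map_image_iff:
  assumes j: "1 \<le> j"
  shows "(1 / real (j + 1) < x \<and> x < 1 / real j) \<longleftrightarrow>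
    (0 < branch_map j x \<and> branch_map j x < 1 / real (odd_pick j))"
proof (cases "odd j")
  case True
  have "(real j + 1) * x - 1 < 1 / real j \<longleftrightarrow> (real j + 1) * (real j * x - 1) < 0"
    using j by (simp add: field_simps)
  also have "\<dots> \<longleftrightarrow> real j * x < 1"
    by (simp add: mult_less_0_iff add_pos_nonneg)
  also have "\<dots> \<longleftrightarrow> x < 1 / real j"
    using j by (simp add: field_simps)
  finally show ?thesis using True by (auto simp: branch_map_def even_pick_def odd_pick_def field_simps)
next
  case False
  have "1 - real j * x < 1 / (real j + 1) \<longleftrightarrow> real j * (1 - (real j + 1) * x) < 0"
    using j by (simp add: field_simps)
  also have "\<dots> \<longleftrightarrow> 1 < (real j + 1) * x"
    using j by (simp add: mult_less_0_iff)
  also have "\<dots> \<longleftrightarrow> 1 / real (j + 1) < x"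
    by (simp add: field_simps)
  finally show ?thesis using False j by (auto simp: branch_map_def even_pick_def odd_pick_def field_simps)
qed

lemma exists_branch:
  assumes x: "0 < x" "x < 1 / real m" and "x \<notin> range (\<lambda>j. 1 / real j)"
  shows "\<exists>j\<ge>m. 1 / real (j + 1) < x \<and> x < 1 / real j"
proof -
  define j where "j = nat (floor (1 / x))"
  have "m \<noteq> 0"
  proof
    assume "m = 0"
    then show False using x by simp
  qed
  then have "real m < 1 / x" using x by (simp add: field_simps)
  moreover have "real j \<le> 1 / x" "1 / x < real j + 1" using \<open>0 < x\<close> by (auto simp: j_def)
  moreover have "real j \<noteq> 1 / x"
  proof
    assume "real j = 1 / x"
    then have "x = 1 / real j" by simp
    then show False using assms(3) by blast
  qed
  ultimately have "real m < real (j + 1)" "real j < 1 / x" "1 / x < real (j + 1)" by auto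
  moreover from this have "m \<le> j" "1 \<le> j" using \<open>m \<noteq> 0\<close> by linarith+
  ultimately have "m \<le> j" "1 / real (j + 1) < x" "x < 1 / real j" using x(1)
    by (simp_all add: field_simps)
  then show ?thesis by blast
qed

lemma sgnT_measurable [measurable]: "sgnT \<in> borel_measurable borel"
  unfolding sgnT_def by measurable

lemma sgn_d1_measurable [measurable]: "sgn_d1 \<in> measurable borel (count_space UNIV)"
  unfolding sgn_d1_def by measurable

lemma real_sgn_d1_measurable [measurable]: "(\<lambda>x. real (sgn_d1 x)) \<in> borel_measurable borel"
  by measurable

lemma funpow_sgnT_measurable [measurable]: "sgnT ^^ k \<in> borel_measurable borel"
  by (induction k) auto

lemma digit_ratio_less_measurable [measurable]:
  "Measurable.pred borel (\<lambda>x. real (sgn_d1 ((sgnT ^^ a) x)) < c * real (sgn_d1 ((sgnT ^^ b) x)))"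
  by measurable

lemma digit_ratio_ge_measurable [measurable]:
  "Measurable.pred borel (\<lambda>x. c * real (sgn_d1 ((sgnT ^^ a) x)) \<le> real (sgn_d1 ((sgnT ^^ b) x)))"
  by measurable

lemma emeasure_branch:
  assumes j: "1 \<le> j" and P: "{y. P (even_pick j) y} \<in> sets borel"
  shows "emeasure lborel ({1 / real (j + 1)<..<1 / real j} \<inter> {x. P (sgn_d1 x) (sgnT x)})
    = ennreal (1 / real (even_pick j)) *
      emeasure lborel ({0<..<1 / real (odd_pick j)} \<inter> {y. P (even_pick j) y})"
proof -
  define B where "B = {0<..<1 / real (odd_pick j)} \<inter> {y. P (even_pick j) y}"
  define e where "e = (if odd j then real (even_pick j) else - real (even_pick j))"
  have "even_pick j \<noteq> 0" using j even_pick_bounds(1)[of j] by linarith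
  then have e0: "e \<noteq> 0" and e_abs: "\<bar>e\<bar> = real (even_pick j)" by (auto simp: e_def)
  have "x \<in> {1 / real (j + 1)<..<1 / real j} \<inter> {x. P (sgn_d1 x) (sgnT x)} \<longleftrightarrow> x \<in> branch_map j -` B"
    for x
  proof (cases "1 / real (j + 1) < x \<and> x < 1 / real j")
    case True
    then have "sgn_d1 x = even_pick j" "sgnT x = branch_map j x"
      and "0 < branch_map j x" "branch_map j x < 1 / real (odd_pick j)"
      using sgn_d1_sgnT_on_branch[OF j] branch_map_image_iff[OF j, of x] by auto
    then show ?thesis using True by (simp add: B_def)
  next
    case False
    then show ?thesis using branch_map_image_iff[OF j, of x] by (auto simp: B_def)
  qed
  then have "{1 / real (j + 1)<..<1 / real j} \<inter> {x. P (sgn_d1 x) (sgnT x)} = branch_map j -` B"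
    by blast
  also have "branch_map j = (\<lambda>x. (if odd j then -1 else 1) + e * x)"
    by (auto simp: branch_map_def e_def)
  also have "emeasure lborel ((\<lambda>x. (if odd j then -1 else 1) + e * x) -` B)
      = ennreal (1 / \<bar>e\<bar>) * emeasure lborel B"
    using P by (intro emeasure_lborel_affine_preimage[OF e0]) (auto simp: B_def)
  finally show ?thesis unfolding e_abs B_def .
qed

lemma emeasure_initial_interval_le_branches:
  assumes S: "S \<in> sets borel"
  shows "emeasure lborel ({0<..<1 / real m} \<inter> S)
    \<le> (\<Sum>j. if m \<le> j then emeasure lborel ({1 / real (j + 1)<..<1 / real j} \<inter> S) else 0)"
proof -
  define A where "A j = (if m \<le> j then {1 / real (j + 1)<..<1 / real j} \<inter> S else {})" for j
  define N where "N = range (\<lambda>j::nat. 1 / real j)"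
  have A[measurable]: "A j \<in> sets borel" for j using S by (simp add: A_def)
  have N: "N \<in> null_sets lborel" unfolding N_def by (intro countable_imp_null_set_lborel) auto
  have "x \<in> (\<Union>j. A j) \<union> N" if x: "x \<in> {0<..<1 / real m} \<inter> S" for x
  proof (cases "x \<in> N")
    case False
    then obtain j where "m \<le> j" "1 / real (j + 1) < x" "x < 1 / real j"
      using exists_branch[of x m] x by (auto simp: N_def)
    then show ?thesis using x by (auto simp: A_def)
  qed simp
  then have "{0<..<1 / real m} \<inter> S \<subseteq> (\<Union>j. A j) \<union> N" by blast
  then have "emeasure lborel ({0<..<1 / real m} \<inter> S) \<le> emeasure lborel ((\<Union>j. A j) \<union> N)"
    using N by (intro emeasure_mono) auto
  also have "\<dots> = emeasure lborel (\<Union>j. A j)"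
    using N by (intro emeasure_Un_null_set) auto
  also have "\<dots> \<le> (\<Sum>j. emeasure lborel (A j))"
    by (intro emeasure_subadditive_countably) auto
  finally show ?thesis by (simp add: A_def if_distrib cong: if_cong)
qed

lemma emeasure_digit_event_le:
  assumes m: "1 \<le> m" and P [measurable]: "\<And>p. Measurable.pred borel (P p)"
    and c: "\<And>j. 0 \<le> c j"
    and bound: "\<And>j. m \<le> j \<Longrightarrow> emeasure lborel ({0<..<1 / real (odd_pick j)} \<inter> {y. P (even_pick j) y})
      \<le> ennreal (c j / real (odd_pick j))"
    and s: "(\<lambda>j. if m \<le> j then c j / (real j * (real j + 1)) else 0) sums s"
  shows "emeasure lborel ({0<..<1 / real m} \<inter> {x. P (sgn_d1 x) (sgnT x)}) \<le> ennreal s"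
proof -
  define f where "f j = (if m \<le> j then c j / (real j * (real j + 1)) else 0)" for j
  have f0: "0 \<le> f j" for j using c by (simp add: f_def)
  have "emeasure lborel ({0<..<1 / real m} \<inter> {x. P (sgn_d1 x) (sgnT x)})
      \<le> (\<Sum>j. if m \<le> j then emeasure lborel ({1 / real (j + 1)<..<1 / real j} \<inter>
          {x. P (sgn_d1 x) (sgnT x)}) else 0)"
    by (rule emeasure_initial_interval_le_branches) measurable
  also have "\<dots> \<le> (\<Sum>j. ennreal (f j))"
  proof (intro suminf_le summableI)
    fix j
    show "(if m \<le> j then emeasure lborel ({1 / real (j + 1)<..<1 / real j} \<inter>
        {x. P (sgn_d1 x) (sgnT x)}) else 0) \<le> ennreal (f j)"
    proof (cases "m \<le> j")
      case True
      then have j: "1 \<le> j" using m by simp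
      have "emeasure lborel ({1 / real (j + 1)<..<1 / real j} \<inter> {x. P (sgn_d1 x) (sgnT x)})
          = ennreal (1 / real (even_pick j)) *
            emeasure lborel ({0<..<1 / real (odd_pick j)} \<inter> {y. P (even_pick j) y})"
        by (rule emeasure_branch[OF j]) measurable
      also have "\<dots> \<le> ennreal (1 / real (even_pick j)) * ennreal (c j / real (odd_pick j))"
        by (intro mult_left_mono bound True) simp
      also have "\<dots> = ennreal (f j)"
        using True even_pick_times_odd_pick[of j] c[of j] by (simp add: f_def ennreal_mult[symmetric])
      finally show ?thesis using True by simp
    qed (simp add: f_def)
  qed
  also have "(\<Sum>j. ennreal (f j)) = ennreal s"
  proof -
    have "0 \<le> s" using sums_le[OF f0 sums_zero s[folded f_def]] .
    then have "(\<lambda>j. ennreal (f j)) sums ennreal s" using s f0 by (simp add: f_def)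
    then show ?thesis by (rule sums_unique[symmetric])
  qed
  finally show ?thesis .
qed

(* c/m has the shape of the total weight of the branches below 1/m, so this property is stable
   under preimages by sgnT. *)
definition initial_density_le :: "real \<Rightarrow> real set \<Rightarrow> bool" where
  "initial_density_le c Q \<longleftrightarrow> (\<forall>m\<ge>1. emeasure lborel ({0<..<1 / real m} \<inter> Q) \<le> ennreal (c / real m))"

lemma initial_density_le_digit_event:
  assumes P [measurable]: "\<And>p. Measurable.pred borel (P p)" and c: "0 \<le> c"
    and bound: "\<And>j. 1 \<le> j \<Longrightarrow> emeasure lborel ({0<..<1 / real (odd_pick j)} \<inter> {y. P (even_pick j) y})
      \<le> ennreal (c / real (odd_pick j))"
  shows "initial_density_le c {x. P (sgn_d1 x) (sgnT x)}"
  unfolding initial_density_le_def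
proof (intro allI impI)
  fix m :: nat
  assume m: "1 \<le> m"
  have "(\<lambda>j. if m \<le> j then c / (real j * (real j + 1)) else 0) sums (c / real m)"
    using sums_mult[OF sums_tail_inverse_mult_Suc[OF m], of c] by (simp add: if_distrib cong: if_cong)
  then show "emeasure lborel ({0<..<1 / real m} \<inter> {x. P (sgn_d1 x) (sgnT x)}) \<le> ennreal (c / real m)"
    using m bound by (intro emeasure_digit_event_le[OF m P c]) auto
qed

lemma initial_density_le_preimage_sgnT:
  assumes Q [measurable]: "Q \<in> sets borel" and c: "0 \<le> c" and "initial_density_le c Q"
  shows "initial_density_le c (sgnT -` Q)"
proof -
  have "1 \<le> j \<Longrightarrow> 1 \<le> odd_pick j" for j using odd_pick_bounds(1)[of j] by linarith
  then have "initial_density_le c {x. (\<lambda>p y. y \<in> Q) (sgn_d1 x) (sgnT x)}"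
    using assms(3) c unfolding initial_density_le_def
    by (intro initial_density_le_digit_event[unfolded initial_density_le_def]) auto
  then show ?thesis by (simp add: vimage_def)
qed

lemma initial_density_le_preimage_funpow:
  assumes Q [measurable]: "Q \<in> sets borel" and c: "0 \<le> c" and "initial_density_le c Q"
  shows "initial_density_le c ((sgnT ^^ k) -` Q)"
proof (induction k)
  case 0
  then show ?case using assms(3) by simp
next
  case (Suc k)
  have "(sgnT ^^ k) -` Q \<in> sets borel" by (rule measurable_sets_borel) measurable
  from initial_density_le_preimage_sgnT[OF this c Suc.IH] show ?case
    by (simp only: funpow_Suc_right vimage_comp)
qed

lemma emeasure_unit_interval_le:
  assumes "initial_density_le c Q"
  shows "emeasure lborel ({0<..<1} \<inter> Q) \<le> ennreal c"
  using assms[unfolded initial_density_le_def, rule_format, of 1] by simp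

lemma sgn_d1_le: "0 < y \<Longrightarrow> real (sgn_d1 y) \<le> 1 / y + 1"
  unfolding sgn_d1_def by auto linarith+

lemma sgn_d1_pos:
  assumes "0 < x" "x < 1"
  shows "0 < sgn_d1 x"
proof -
  have "1 < 1 / x" using assms by simp
  then show ?thesis using assms(1) unfolding sgn_d1_def by auto
qed

lemma emeasure_large_digit_le:
  assumes t: "1 \<le> t" and j: "1 \<le> j"
  shows "emeasure lborel ({0<..<1 / real (odd_pick j)} \<inter> {y. t * real (even_pick j) \<le> real (sgn_d1 y)})
    \<le> ennreal (3 / t / real (odd_pick j))"
proof -
  define s where "s = t * real (even_pick j)"
  have p: "2 \<le> real (even_pick j)" using even_pick_ge_2[OF j] by simp
  have s: "2 \<le> s" unfolding s_def using mult_mono[OF t p] t by simp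
  have "{0<..<1 / real (odd_pick j)} \<inter> {y. s \<le> real (sgn_d1 y)} \<subseteq> {0<..1 / (s - 1)}"
  proof
    fix y assume y: "y \<in> {0<..<1 / real (odd_pick j)} \<inter> {y. s \<le> real (sgn_d1 y)}"
    then have "s - 1 \<le> 1 / y" using sgn_d1_le[of y] by auto
    then show "y \<in> {0<..1 / (s - 1)}" using y s by (auto simp: field_simps)
  qed
  then have "emeasure lborel ({0<..<1 / real (odd_pick j)} \<inter> {y. s \<le> real (sgn_d1 y)})
      \<le> emeasure lborel {0<..1 / (s - 1)}"
    by (rule emeasure_mono) simp
  also have "\<dots> = ennreal (1 / (s - 1))" using s by simp
  also have "1 / (s - 1) \<le> 3 / t / real (odd_pick j)"
  proof -
    have "real (odd_pick j) \<le> real (even_pick j) + 1"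
      using odd_pick_bounds(2)[of j] even_pick_bounds(1)[of j] by linarith
    then have "t * real (odd_pick j) \<le> t * (real (even_pick j) + 1)"
      using t by (intro mult_left_mono) auto
    then have "t * real (odd_pick j) \<le> s + t" by (simp add: s_def algebra_simps)
    moreover have "2 * t \<le> s" unfolding s_def using p t by simp
    ultimately have "t * real (odd_pick j) \<le> 3 * (s - 1)" using t by argo
    moreover have "1 \<le> real (odd_pick j)" using odd_pick_bounds(1)[of j] j by linarith
    ultimately show ?thesis using t s by (simp add: field_simps)
  qed
  finally show ?thesis unfolding s_def by (simp add: ennreal_leI)
qed

lemma initial_density_le_large_ratio:
  assumes "1 \<le> t"
  shows "initial_density_le (3 / t) {z. t * real (sgn_d1 z) \<le> real (sgn_d1 (sgnT z))}"
proof (rule initial_density_le_digit_event[where P = "\<lambda>p y. t * real p \<le> real (sgn_d1 y)"])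
  show "Measurable.pred borel (\<lambda>y. t * real p \<le> real (sgn_d1 y))" for p by measurable
qed (use assms emeasure_large_digit_le in auto)

lemma emeasure_large_ratio_le:
  assumes "1 \<le> t"
  shows "emeasure lborel ({0<..<1} \<inter>
      {x. t * real (sgn_d1 ((sgnT ^^ k) x)) \<le> real (sgn_d1 ((sgnT ^^ Suc k) x))}) \<le> ennreal (3 / t)"
proof -
  have "{z. t * real (sgn_d1 z) \<le> real (sgn_d1 (sgnT z))} \<in> sets borel" by measurable
  then have "initial_density_le (3 / t) ((sgnT ^^ k) -` {z. t * real (sgn_d1 z) \<le> real (sgn_d1 (sgnT z))})"
    using assms initial_density_le_large_ratio[OF assms]
    by (intro initial_density_le_preimage_funpow) auto
  from emeasure_unit_interval_le[OF this] show ?thesis by (simp add: vimage_def)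
qed

(* The first L digits of y satisfy d(i+1) < t i * d(i), where p plays the role of the digit
   preceding y. *)
fun ratios_below :: "nat \<Rightarrow> (nat \<Rightarrow> real) \<Rightarrow> nat \<Rightarrow> real \<Rightarrow> bool" where
  "ratios_below 0 t p y \<longleftrightarrow> True"
| "ratios_below (Suc L) t p y \<longleftrightarrow>
    real (sgn_d1 y) < t 0 * real p \<and> ratios_below L (\<lambda>i. t (Suc i)) (sgn_d1 y) (sgnT y)"

lemma ratios_below_measurable [measurable]: "Measurable.pred borel (ratios_below L t p)"
proof (induction L arbitrary: t p)
  case (Suc L)
  note [measurable] = Suc.IH
  show ?case by simp
qed (simp add: pred_def)

lemma ratios_below_iff:
  "ratios_below L t (sgn_d1 z) (sgnT z) \<longleftrightarrow>
    (\<forall>i<L. real (sgn_d1 ((sgnT ^^ Suc i) z)) < t i * real (sgn_d1 ((sgnT ^^ i) z)))"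
proof (induction L arbitrary: t z)
  case (Suc L)
  show ?case
    unfolding ratios_below.simps Suc.IH All_less_Suc2
    by (simp add: funpow_Suc_right del: funpow.simps)
qed simp

lemma emeasure_small_digit_event_le:
  assumes m: "1 \<le> m" and P [measurable]: "\<And>p. Measurable.pred borel (P p)" and c: "0 \<le> c"
    and bound: "\<And>j. m \<le> j \<Longrightarrow> real (even_pick j) < s \<Longrightarrow>
      emeasure lborel ({0<..<1 / real (odd_pick j)} \<inter> {y. P (even_pick j) y})
        \<le> ennreal (c / real (odd_pick j))"
  shows "emeasure lborel ({0<..<1 / real m} \<inter> {x. real (sgn_d1 x) < s \<and> P (sgn_d1 x) (sgnT x)})
    \<le> ennreal (c * (1 / real m - 1 / real (max m (nat \<lceil>s\<rceil>))))"
proof -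
  define N where "N = max m (nat \<lceil>s\<rceil>)"
  have mN: "m \<le> N" by (simp add: N_def)
  have "(\<lambda>j. c * ((if m \<le> j then 1 / (real j * (real j + 1)) else 0)
      - (if N \<le> j then 1 / (real j * (real j + 1)) else 0))) sums (c * (1 / real m - 1 / real N))"
    using m mN by (intro sums_mult sums_diff sums_tail_inverse_mult_Suc) auto
  then have sums: "(\<lambda>j. if m \<le> j then (if j < N then c else 0) / (real j * (real j + 1)) else 0)
      sums (c * (1 / real m - 1 / real N))"
    by (rule sums_cong[THEN iffD1, rotated]) (use mN in auto)
  have "emeasure lborel ({0<..<1 / real (odd_pick j)} \<inter> {y. real (even_pick j) < s \<and> P (even_pick j) y})
    \<le> ennreal ((if j < N then c else 0) / real (odd_pick j))" if j: "m \<le> j" for j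
  proof (cases "real (even_pick j) < s")
    case True
    then have "j < N" using even_pick_bounds(1)[of j] unfolding N_def by linarith
    moreover have "emeasure lborel ({0<..<1 / real (odd_pick j)} \<inter>
        {y. real (even_pick j) < s \<and> P (even_pick j) y})
      \<le> emeasure lborel ({0<..<1 / real (odd_pick j)} \<inter> {y. P (even_pick j) y})"
      by (intro emeasure_mono) auto
    ultimately show ?thesis using bound[OF j True] by simp
  qed simp
  then show ?thesis
    unfolding N_def[symmetric] using c
    by (intro emeasure_digit_event_le[OF m _ _ _ sums]) auto
qed

lemma inverse_diff_max_ceiling_le:
  assumes t: "1 \<le> t" and m: "1 \<le> m" and p: "p \<le> m + 1"
  shows "1 / real m - 1 / real (max m (nat \<lceil>t * real p\<rceil>)) \<le> (1 - 1 / (3 * t)) / real m"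
proof -
  define N where "N = max m (nat \<lceil>t * real p\<rceil>)"
  have "real p \<le> real (m + 1)" using p by (rule of_nat_mono)
  then have "t * (real p + 1) \<le> t * (3 * real m)"
    using m t by (intro mult_left_mono) auto
  then have "t * real p + 1 \<le> 3 * t * real m" using t by (simp add: algebra_simps)
  moreover have "real m \<le> 3 * t * real m" using t mult_right_mono[of 1 "3 * t" "real m"] by simp
  ultimately have "real N \<le> 3 * t * real m" unfolding N_def by linarith
  moreover have "m \<le> N" by (simp add: N_def)
  ultimately have "1 / (3 * t * real m) \<le> 1 / real N" using m t by (intro divide_left_mono) auto
  moreover have "(1 - 1 / (3 * t)) / real m = 1 / real m - 1 / (3 * t * real m)"
    using m t by (simp add: field_simps)
  ultimately have "1 / real m - 1 / real N \<le> (1 - 1 / (3 * t)) / real m" by linarith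
  then show ?thesis unfolding N_def .
qed

lemma emeasure_ratios_below_le:
  assumes "\<And>i. 1 \<le> t i" and "1 \<le> m" and "p \<le> m + 1"
  shows "emeasure lborel ({0<..<1 / real m} \<inter> {y. ratios_below L t p y})
    \<le> ennreal ((\<Prod>i<L. 1 - 1 / (3 * t i)) / real m)"
  using assms
proof (induction L arbitrary: t m p)
  case 0
  then show ?case by simp
next
  case (Suc L)
  define Pr where "Pr = (\<Prod>i<L. 1 - 1 / (3 * t (Suc i)))"
  define N where "N = max m (nat \<lceil>t 0 * real p\<rceil>)"
  have t: "1 \<le> t i" for i by (rule Suc.prems)
  have m: "1 \<le> m" and p: "p \<le> m + 1" by (fact Suc.prems)+
  have "0 \<le> 1 - 1 / (3 * t i)" for i using t[of i] by (simp add: field_simps)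
  then have Pr: "0 \<le> Pr" unfolding Pr_def by (intro prod_nonneg) auto
  have "emeasure lborel ({0<..<1 / real m} \<inter> {y. ratios_below (Suc L) t p y})
      \<le> ennreal (Pr * (1 / real m - 1 / real N))"
    unfolding ratios_below.simps N_def
  proof (rule emeasure_small_digit_event_le[OF m _ Pr])
    fix j assume "m \<le> j"
    then have "1 \<le> odd_pick j" "even_pick j \<le> odd_pick j + 1"
      using m odd_pick_bounds[of j] even_pick_bounds[of j] by linarith+
    then show "emeasure lborel ({0<..<1 / real (odd_pick j)} \<inter>
        {y. ratios_below L (\<lambda>i. t (Suc i)) (even_pick j) y}) \<le> ennreal (Pr / real (odd_pick j))"
      unfolding Pr_def using t by (intro Suc.IH) auto
  qed measurable
  also have "Pr * (1 / real m - 1 / real N) \<le> Pr * ((1 - 1 / (3 * t 0)) / real m)"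
    unfolding N_def using t[of 0] m p by (intro mult_left_mono[OF _ Pr] inverse_diff_max_ceiling_le)
  also have "Pr * ((1 - 1 / (3 * t 0)) / real m) = (\<Prod>i<Suc L. 1 - 1 / (3 * t i)) / real m"
    unfolding Pr_def prod.lessThan_Suc_shift by simp
  finally show ?case by (simp add: ennreal_leI)
qed

lemma initial_density_le_ratios_below:
  assumes t: "\<And>i. 1 \<le> t i"
  shows "initial_density_le (\<Prod>i<L. 1 - 1 / (3 * t i)) {z. ratios_below L t (sgn_d1 z) (sgnT z)}"
proof (rule initial_density_le_digit_event)
  have "0 \<le> 1 - 1 / (3 * t i)" for i using t[of i] by (simp add: field_simps)
  then show "0 \<le> (\<Prod>i<L. 1 - 1 / (3 * t i))" by (intro prod_nonneg) auto
  fix j :: nat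
  assume "1 \<le> j"
  then show "emeasure lborel ({0<..<1 / real (odd_pick j)} \<inter> {y. ratios_below L t (even_pick j) y})
      \<le> ennreal ((\<Prod>i<L. 1 - 1 / (3 * t i)) / real (odd_pick j))"
    using odd_pick_bounds[of j] even_pick_bounds[of j] by (intro emeasure_ratios_below_le t) linarith+
qed measurable

lemma emeasure_small_ratios_le:
  assumes t: "\<And>i. 1 \<le> t i"
  shows "emeasure lborel ({0<..<1} \<inter> {x. \<forall>i<L.
      real (sgn_d1 ((sgnT ^^ Suc (N + i)) x)) < t i * real (sgn_d1 ((sgnT ^^ (N + i)) x))})
    \<le> ennreal (\<Prod>i<L. 1 - 1 / (3 * t i))"
proof -
  let ?Q = "{z. ratios_below L t (sgn_d1 z) (sgnT z)}"
  have "?Q \<in> sets borel" by measurable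
  moreover have "0 \<le> 1 - 1 / (3 * t i)" for i using t[of i] by (simp add: field_simps)
  ultimately have dens: "initial_density_le (\<Prod>i<L. 1 - 1 / (3 * t i)) ((sgnT ^^ N) -` ?Q)"
    by (intro initial_density_le_preimage_funpow initial_density_le_ratios_below t prod_nonneg) auto
  have shift: "(sgnT ^^ (N + k)) x = (sgnT ^^ k) ((sgnT ^^ N) x)"
    "(sgnT ^^ Suc (N + k)) x = (sgnT ^^ Suc k) ((sgnT ^^ N) x)" for k x
    by (metis add.commute comp_apply funpow_add, metis add.commute add_Suc comp_apply funpow_add)
  then have "(sgnT ^^ N) -` ?Q = {x. \<forall>i<L.
      real (sgn_d1 ((sgnT ^^ Suc (N + i)) x)) < t i * real (sgn_d1 ((sgnT ^^ (N + i)) x))}"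
    unfolding ratios_below_iff shift vimage_def by simp
  with emeasure_unit_interval_le[OF dens] show ?thesis by simp
qed

(* Irrational points never reach the value 0 of sgnT, so all their digits are positive. *)
lemma sgnT_irrational:
  assumes x: "x \<in> {0<..<1} - \<rat>"
  shows "sgnT x \<in> {0<..<1} - \<rat>"
proof -
  have "x \<notin> range (\<lambda>j. 1 / real j)" using x by auto
  then obtain j where j: "1 \<le> j" "1 / real (j + 1) < x" "x < 1 / real j"
    using exists_branch[of x 1] x by auto
  have T: "sgnT x = branch_map j x" using sgn_d1_sgnT_on_branch[OF j] by simp
  have "0 < sgnT x" "sgnT x < 1 / real (odd_pick j)"
    using branch_map_image_iff[OF j(1), of x] j T by auto
  moreover have "1 / real (odd_pick j) \<le> 1" using odd_pick_bounds(1)[of j] j(1) by simp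
  moreover have "sgnT x \<notin> \<rat>"
  proof
    assume "sgnT x \<in> \<rat>"
    then have "(sgnT x + 1) / real (even_pick j) \<in> \<rat>" "(1 - sgnT x) / real (even_pick j) \<in> \<rat>"
      by (auto intro!: Rats_divide Rats_add Rats_diff)
    moreover have "real (even_pick j) \<noteq> 0" using even_pick_ge_2[OF j(1)] by simp
    then have "x = (if odd j then (sgnT x + 1) / real (even_pick j) else (1 - sgnT x) / real (even_pick j))"
      by (auto simp: T branch_map_def field_simps)
    ultimately have "x \<in> \<rat>" by (cases "odd j") auto
    then show False using x by simp
  qed
  ultimately show ?thesis by auto
qed

lemma funpow_sgnT_irrational: "x \<in> {0<..<1} - \<rat> \<Longrightarrow> (sgnT ^^ k) x \<in> {0<..<1} - \<rat>"
  by (induction k) (simp_all add: sgnT_irrational del: Diff_iff)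

lemma sgn_d1_funpow_pos: "x \<in> {0<..<1} - \<rat> \<Longrightarrow> 0 < sgn_d1 ((sgnT ^^ k) x)"
  using funpow_sgnT_irrational[of x k] by (intro sgn_d1_pos) auto

lemma sgn_R_Suc_Suc:
  "sgn_R (Suc (Suc k)) x = real (sgn_d1 ((sgnT ^^ Suc k) x)) / real (sgn_d1 ((sgnT ^^ k) x))"
  by (simp add: sgn_R_def sgn_d_def)

lemma sgn_R_Suc_Suc_less_iff:
  assumes "x \<in> {0<..<1} - \<rat>"
  shows "sgn_R (Suc (Suc k)) x < c \<longleftrightarrow>
    real (sgn_d1 ((sgnT ^^ Suc k) x)) < c * real (sgn_d1 ((sgnT ^^ k) x))"
  using sgn_d1_funpow_pos[OF assms, of k]
  by (simp add: sgn_R_Suc_Suc pos_divide_less_eq del: funpow.simps)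

lemma sgn_R_pos:
  assumes x: "x \<in> {0<..<1} - \<rat>" and n: "1 \<le> n"
  shows "0 < sgn_R n x"
proof (cases n)
  case (Suc k)
  show ?thesis
  proof (cases k)
    case 0
    then show ?thesis using Suc sgn_d1_funpow_pos[OF x, of 0] by (simp add: sgn_R_def sgn_d_def)
  next
    case (Suc k')
    then show ?thesis using \<open>n = Suc k\<close> sgn_d1_funpow_pos[OF x, of k'] sgn_d1_funpow_pos[OF x, of "Suc k'"]
      by (simp add: sgn_R_Suc_Suc del: funpow.simps)
  qed
qed (use n in simp)

lemma null_sets_small_ratios:
  assumes t: "\<And>i. 1 \<le> t i" and ns: "\<not> summable (\<lambda>i. 1 / (3 * t i))"
  shows "{0<..<1} \<inter> {x. \<forall>i. real (sgn_d1 ((sgnT ^^ Suc (N + i)) x))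
    < t i * real (sgn_d1 ((sgnT ^^ (N + i)) x))} \<in> null_sets lborel" (is "?E \<in> _")
proof -
  have le_e: "emeasure lborel ?E \<le> ennreal e" if e: "0 < e" for e
  proof -
    have "0 \<le> 1 / (3 * t i)" "1 / (3 * t i) \<le> 1" for i
      using t[of i] by (auto simp: field_simps)
    then obtain L where L: "(\<Prod>i<L. 1 - 1 / (3 * t i)) < e"
      using prod_one_minus_less[OF _ _ ns e] by blast
    have "?E \<subseteq> {0<..<1} \<inter> {x. \<forall>i<L.
        real (sgn_d1 ((sgnT ^^ Suc (N + i)) x)) < t i * real (sgn_d1 ((sgnT ^^ (N + i)) x))}"
      by auto
    then have "emeasure lborel ?E \<le> emeasure lborel ({0<..<1} \<inter> {x. \<forall>i<L.
        real (sgn_d1 ((sgnT ^^ Suc (N + i)) x)) < t i * real (sgn_d1 ((sgnT ^^ (N + i)) x))})"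
      by (rule emeasure_mono) measurable
    also have "\<dots> \<le> ennreal (\<Prod>i<L. 1 - 1 / (3 * t i))" by (rule emeasure_small_ratios_le[OF t])
    also have "\<dots> \<le> ennreal e" using L by (intro ennreal_leI) simp
    finally show ?thesis .
  qed
  have "emeasure lborel ?E \<le> 0" by (rule ennreal_le_epsilon) (use le_e in simp)
  moreover have "?E \<in> sets lborel" by measurable
  ultimately show ?thesis by (intro null_setsI) auto
qed

lemma AE_frequently_sgn_R_ge:
  "AE x in lborel. x \<in> {0<..<1} - \<rat> \<longrightarrow>
    frequently (\<lambda>n. real n * ln (real n) \<le> sgn_R n x) sequentially"
proof -
  define t where "t N i = real (N + i + 3) * ln (real (N + i + 3))" for N i :: nat
  define E where "E N = {0<..<1} \<inter> {x. \<forall>i. real (sgn_d1 ((sgnT ^^ Suc (Suc N + i)) x))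
    < t N i * real (sgn_d1 ((sgnT ^^ (Suc N + i)) x))}" for N
  have t: "1 \<le> t N i" for N i
  proof -
    have "1 < ln (real (N + i + 3))" by (rule one_less_ln_nat) simp
    then show ?thesis unfolding t_def using mult_mono[of 1 "real (N + i + 3)" 1] by simp
  qed
  have "\<not> summable (\<lambda>i. 1 / (3 * t N i))" for N
    using not_summable_inverse_mult_ln_shift[of 3 "N + 3"] by (simp add: t_def add_ac)
  then have E_null: "E N \<in> null_sets lborel" for N
    unfolding E_def using t by (intro null_sets_small_ratios) auto
  have "AE x in lborel. \<forall>N. x \<notin> E N" using E_null by (simp add: AE_all_countable AE_not_in)
  then show ?thesis
  proof eventually_elim
    case (elim x)
    show ?case
    proof (rule impI, rule ccontr)
      assume x: "x \<in> {0<..<1} - \<rat>"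
        and "\<not> frequently (\<lambda>n. real n * ln (real n) \<le> sgn_R n x) sequentially"
      then have "eventually (\<lambda>n. sgn_R n x < real n * ln (real n)) sequentially"
        by (simp add: not_frequently not_le)
      then obtain N where N: "\<And>n. N \<le> n \<Longrightarrow> sgn_R n x < real n * ln (real n)"
        unfolding eventually_sequentially by blast
      have "x \<in> E N"
        unfolding E_def
      proof (intro IntI CollectI allI)
        fix i
        have "sgn_R (N + i + 3) x < t N i" using N[of "N + i + 3"] by (simp add: t_def)
        moreover have "N + i + 3 = Suc (Suc (Suc N + i))" by simp
        ultimately have "sgn_R (Suc (Suc (Suc N + i))) x < t N i" by (simp only:)
        then show "real (sgn_d1 ((sgnT ^^ Suc (Suc N + i)) x))
            < t N i * real (sgn_d1 ((sgnT ^^ (Suc N + i)) x))"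
          unfolding sgn_R_Suc_Suc_less_iff[OF x] .
      qed (use x in auto)
      then show False using elim by blast
    qed
  qed
qed

lemma AE_eventually_ratio_less:
  assumes u: "\<And>k. 1 \<le> u k" and summ: "summable (\<lambda>k. 1 / u k)"
  shows "AE x in lborel. eventually (\<lambda>k. x \<in> {0<..<1} \<longrightarrow>
    real (sgn_d1 ((sgnT ^^ Suc (Suc k)) x)) < u k * real (sgn_d1 ((sgnT ^^ Suc k) x))) sequentially"
proof -
  define A where "A k = {0<..<1} \<inter>
    {x. u k * real (sgn_d1 ((sgnT ^^ Suc k) x)) \<le> real (sgn_d1 ((sgnT ^^ Suc (Suc k)) x))}" for k
  have A [measurable]: "A k \<in> sets lborel" for k unfolding A_def by measurable
  have A_le: "emeasure lborel (A k) \<le> ennreal (3 / u k)" for k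
    unfolding A_def by (rule emeasure_large_ratio_le[OF u])
  then have A_fin: "emeasure lborel (A k) < \<infinity>" for k
    by (rule le_less_trans) simp
  have "measure lborel (A k) \<le> 3 * (1 / u k)" for k
    using A_le[of k] A_fin[of k] u[of k] by (simp add: measure_def enn2real_leI)
  then have "summable (\<lambda>k. measure lborel (A k))"
    by (intro summable_comparison_test'[OF summable_mult[OF summ], where N = 0]) simp
  then have "AE x in lborel. eventually (\<lambda>k. x \<in> space lborel - A k) sequentially"
    using A A_fin by (intro borel_cantelli_AE1)
  then show ?thesis
    by (rule AE_mp) (auto simp: A_def not_le elim: eventually_mono)
qed

lemma AE_eventually_sgn_R_le:
  assumes p: "1 < p"
  shows "AE x in lborel. x \<in> {0<..<1} - \<rat> \<longrightarrow>
    eventually (\<lambda>n. sgn_R n x \<le> real n * ln (real n) powr p) sequentially"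
proof -
  define u where "u k = real (k + 3) * ln (real (k + 3)) powr p" for k :: nat
  have u: "1 \<le> u k" for k
  proof -
    have "1 < ln (real (k + 3))" by (rule one_less_ln_nat) simp
    then have "1 \<le> ln (real (k + 3)) powr p" using p by (intro ge_one_powr_ge_zero) auto
    then show ?thesis unfolding u_def using mult_mono[of 1 "real (k + 3)" 1] by simp
  qed
  have "summable (\<lambda>k. 1 / u k)"
    using summable_inverse_mult_ln_powr[OF p] unfolding u_def by (subst summable_iff_shift)
  from AE_eventually_ratio_less[OF u this] show ?thesis
  proof eventually_elim
    case (elim x)
    show ?case
    proof
      assume x: "x \<in> {0<..<1} - \<rat>"
      from elim have "eventually (\<lambda>k. sgn_R (k + 3) x \<le> real (k + 3) * ln (real (k + 3)) powr p) sequentially"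
      proof eventually_elim
        case (elim k)
        then have "sgn_R (Suc (Suc (Suc k))) x < u k"
          unfolding sgn_R_Suc_Suc_less_iff[OF x] using x by simp
        then have "sgn_R (k + 3) x < u k" by (simp add: numeral_3_eq_3)
        then show ?case unfolding u_def by (rule less_imp_le)
      qed
      then show "eventually (\<lambda>n. sgn_R n x \<le> real n * ln (real n) powr p) sequentially"
        by (rule eventually_sequentially_seg[THEN iffD1])
    qed
  qed
qed

lemma AE_eventually_sgn_R_le_all:
  "AE x in lborel. x \<in> {0<..<1} - \<rat> \<longrightarrow>
    (\<forall>p>1. eventually (\<lambda>n. sgn_R n x \<le> real n * ln (real n) powr p) sequentially)"
proof -
  \<comment> \<open>countably many exponents suffice, as the bound is monotone in \<open>p\<close>\<close>
  have "AE x in lborel. \<forall>q::nat. x \<in> {0<..<1} - \<rat> \<longrightarrow>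
      eventually (\<lambda>n. sgn_R n x \<le> real n * ln (real n) powr (1 + 1 / (real q + 1))) sequentially"
    unfolding AE_all_countable by (intro allI AE_eventually_sgn_R_le) (simp add: add_pos_nonneg)
  then show ?thesis
  proof eventually_elim
    case (elim x)
    show ?case
    proof (intro impI allI)
      fix p :: real
      assume x: "x \<in> {0<..<1} - \<rat>" and p: "1 < p"
      obtain q :: nat where q: "1 / (real q + 1) < p - 1"
        using reals_Archimedean[of "p - 1"] p by (auto simp: inverse_eq_divide add.commute)
      have "eventually (\<lambda>n. sgn_R n x \<le> real n * ln (real n) powr (1 + 1 / (real q + 1))) sequentially"
        using elim x by blast
      then have "eventually (\<lambda>n. sgn_R n x \<le> real n * ln (real n) powr (1 + 1 / (real q + 1)) \<and> 3 \<le> n)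
          sequentially"
        using eventually_ge_at_top by (rule eventually_conj)
      then show "eventually (\<lambda>n. sgn_R n x \<le> real n * ln (real n) powr p) sequentially"
      proof eventually_elim
        case (elim n)
        have "1 \<le> ln (real n)" using one_less_ln_nat[of n] elim by simp
        then have "ln (real n) powr (1 + 1 / (real q + 1)) \<le> ln (real n) powr p"
          using q by (intro powr_mono) auto
        then show ?case using elim by (meson mult_left_mono of_nat_0_le_iff order_trans)
      qed
    qed
  qed
qed

lemma AE_loglog_growth_sgn_R: "AE x in lborel. 0 < x \<and> x < 1 \<longrightarrow> loglog_growth (\<lambda>n. sgn_R n x)"
  using AE_not_in[OF countable_imp_null_set_lborel[OF countable_rat]]
    AE_frequently_sgn_R_ge AE_eventually_sgn_R_le_all
proof eventually_elim
  case (elim x)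
  show ?case
  proof
    assume "0 < x \<and> x < 1"
    then have x: "x \<in> {0<..<1} - \<rat>" using elim by simp
    have "eventually (\<lambda>n. 0 < sgn_R n x) sequentially"
      using eventually_ge_at_top[of 1] by eventually_elim (rule sgn_R_pos[OF x])
    then show "loglog_growth (\<lambda>n. sgn_R n x)" using elim x by (simp add: loglog_growth_def)
  qed
qed

theorem theorem1p7:
  shows "AE x in lebesgue. x \<in> {0<..<1} \<longrightarrow>
    (limsup (\<lambda>n. ereal ((ln (sgn_R n x) - ln (real n)) / ln (ln (real n)))) = 1 \<and>
     limsup (\<lambda>n. ereal ((ln (sgn_M n x) - ln (real n)) / ln (ln (real n)))) = 1)"
proof -
  have "AE x in lborel. x \<in> {0<..<1} \<longrightarrow>
      loglog_growth (\<lambda>n. sgn_R n x) \<and> loglog_growth (\<lambda>n. sgn_M n x)"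
    using AE_loglog_growth_sgn_R
  proof eventually_elim
    case (elim x)
    then show ?case using loglog_growth_running_max[of "\<lambda>n. sgn_R n x"] by (simp add: sgn_M_def)
  qed
  then show ?thesis
    by (intro AE_completion) (auto elim!: eventually_mono simp: limsup_loglog_exponent_eq_1)
qed

end
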